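(* If $n$ is a prime number, or $n=4$, then there exists no u-p-cycle for $n$-permutations.
   Context: An $n$-permutation is a permutation of $\{1,\ldots,n\}$. For a word $w$ of distinct numbers, $\mathrm{red}(w)$ is obtained by replacing the $i$-th smallest letter by $i$. Let $\Diamond$ be a symbol not among the integers. A word $f=f_1\cdots f_n$ over the positive integers together with $\Diamond$, whose integer letters are pairwise distinct, covers an $n$-permutation $\pi$ if one can substitute real numbers for the occurrences of $\Diamond$ (independently) so that the resulting word has $n$ pairwise distinct entries and reduces to $\pi$; equivalently, $f_i<f_j\iff\pi_i<\pi_j$ for all positions $i,j$ holding integers. A u-p-cycle (universal partial cycle) for $n$-permutations is a cyclic word $u_1\cdots u_N$ with $N\geq n$ over this alphabet containing at least one $\Diamond$, indices read modulo $N$, such that each of its $N$ cyclic factors $u_iu_{i+1}\cdots u_{i+n-1}$ ($1\leq i\leq N$) has pairwise distinct integer letters and every $n$-permutation is covered by exactly one of these factors. *)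

theory Defs
  imports Complex_Main "HOL-Computational_Algebra.Primes"
begin

text \<open>Letters: None is the symbol Diamond, Some k is the positive integer k.
  An n-permutation is represented by its one-line notation as a list.\<close>

definition is_perm :: "nat \<Rightarrow> nat list \<Rightarrow> bool" where
  "is_perm n p \<longleftrightarrow> length p = n \<and> distinct p \<and> set p = {1..n}"

definition distinct_ints :: "nat option list \<Rightarrow> bool" where
  "distinct_ints f \<longleftrightarrow> distinct (filter (\<lambda>x. x \<noteq> None) f)"

text \<open>f covers p: substitute reals for the Diamonds so that the resulting word
  has pairwise distinct entries and its reduction equals p (the reduction
  replaces the i-th smallest letter by i).\<close>
definition covers :: "nat option list \<Rightarrow> nat list \<Rightarrow> bool" where
  "covers f p \<longleftrightarrow> length f = length p \<and>
     (\<exists>r :: nat \<Rightarrow> real.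
        (\<forall>i < length f. \<forall>a. f ! i = Some a \<longrightarrow> r i = real a) \<and>
        inj_on r {..<length f} \<and>
        (\<forall>i < length f. p ! i = card {j. j < length f \<and> r j \<le> r i}))"

text \<open>The cyclic factor of length n starting at position i (0-based, indices mod N).\<close>
definition cfactor :: "nat option list \<Rightarrow> nat \<Rightarrow> nat \<Rightarrow> nat option list" where
  "cfactor u n i = map (\<lambda>j. u ! ((i + j) mod length u)) [0..<n]"

definition upcycle :: "nat \<Rightarrow> nat option list \<Rightarrow> bool" where
  "upcycle n u \<longleftrightarrow>
     length u \<ge> n \<and> None \<in> set u \<and> (\<forall>x \<in> set u. x \<noteq> Some 0) \<and>
     (\<forall>i < length u. distinct_ints (cfactor u n i)) \<and>
     (\<forall>p. is_perm n p \<longrightarrow> (\<exists>!i. i < length u \<and> covers (cfactor u n i) p))"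

end

theory Submission
  imports Defs "HOL-Combinatorics.Multiset_Permutations"
begin

text \<open>Let u be a u-p-cycle of length N for n-permutations, n \<ge> 2. If position p holds a
  Diamond but position p + n holds a letter, one constructs a pattern covered by two
  different windows, so the Diamonds are periodic with period n, and hence with period
  g = gcd n N. Therefore every window contains the same number k \<ge> 1 of Diamonds, at least
  n / g of them. A window with k Diamonds covers exactly n! / (n - k)! permutations, and the
  N windows partition all n! of them, so N = (n - k)!. For prime n, either g = 1, forcing
  k = n and N = 1 < n, or n divides (n - k)!, which is impossible; for n = 4 the few
  remaining values of k are checked directly.\<close>

definition red :: "nat \<Rightarrow> (nat \<Rightarrow> 'a::linorder) \<Rightarrow> nat list" where
  "red n y = map (\<lambda>i. card {j. j < n \<and> y j \<le> y i}) [0..<n]"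

lemma length_red [simp]: "length (red n y) = n"
  by (simp add: red_def)

lemma nth_red: "i < n \<Longrightarrow> red n y ! i = card {j. j < n \<and> y j \<le> y i}"
  by (simp add: red_def)

lemma red_cong:
  assumes "\<And>i j. i < n \<Longrightarrow> j < n \<Longrightarrow> x i < x j \<longleftrightarrow> y i < y j"
  shows "red n x = red n y"
proof (rule nth_equalityI)
  fix i assume "i < length (red n x)"
  then have "x j \<le> x i \<longleftrightarrow> y j \<le> y i" if "j < n" for j
    using assms[of i j] that by (metis length_red not_le)
  then have "{j. j < n \<and> x j \<le> x i} = {j. j < n \<and> y j \<le> y i}"
    by auto
  then show "red n x ! i = red n y ! i"
    using \<open>i < length (red n x)\<close> by (simp add: nth_red)
qed simp

lemma red_less_iff:
  assumes inj: "inj_on y {..<n}" and i: "i < n" and j: "j < n"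
  shows "red n y ! i < red n y ! j \<longleftrightarrow> y i < y j"
proof -
  let ?L = "\<lambda>k. {l. l < n \<and> y l \<le> y k}"
  have "card (?L i) < card (?L j)" if "y i < y j"
  proof (rule psubset_card_mono)
    have "j \<in> ?L j - ?L i"
      using that j by auto
    moreover have "?L i \<subseteq> ?L j"
      using that by (blast intro: order_trans less_imp_le)
    ultimately show "?L i \<subset> ?L j"
      by blast
  qed simp
  moreover have "card (?L j) \<le> card (?L i)" if "\<not> y i < y j"
  proof (rule card_mono)
    show "?L j \<subseteq> ?L i"
      using that by (blast intro: order_trans not_less[THEN iffD1])
  qed simp
  ultimately show ?thesis
    using i j by (simp add: nth_red) (meson not_le)
qed

lemma nth_red_bounds:
  assumes "i < n"
  shows "red n y ! i \<in> {1..n}"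
proof -
  have "card {j. j < n \<and> y j \<le> y i} \<le> card {..<n}"
    by (intro card_mono) auto
  moreover have "i \<in> {j. j < n \<and> y j \<le> y i}"
    using assms by simp
  ultimately show ?thesis
    using assms by (auto simp: nth_red card_gt_0_iff Suc_le_eq)
qed

lemma is_perm_red:
  assumes inj: "inj_on y {..<n}"
  shows "is_perm n (red n y)"
proof -
  have "distinct (red n y)"
  proof (rule distinct_conv_nth[THEN iffD2], intro allI impI)
    fix i j assume "i < length (red n y)" "j < length (red n y)" "i \<noteq> j"
    then have "i < n" "j < n" "y i \<noteq> y j"
      using inj by (auto dest: inj_onD)
    then show "red n y ! i \<noteq> red n y ! j"
      using red_less_iff[OF inj, of i j] red_less_iff[OF inj, of j i] by auto
  qed
  moreover have "set (red n y) \<subseteq> {1..n}"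
    using nth_red_bounds[of _ n y] by (auto simp: in_set_conv_nth)
  moreover from calculation have "card (set (red n y)) = n"
    by (simp add: distinct_card)
  ultimately show ?thesis
    unfolding is_perm_def by (simp add: card_subset_eq)
qed

lemma red_nth_perm:
  assumes p: "is_perm n p"
  shows "red n ((!) p) = p"
proof (rule nth_equalityI)
  have len: "length p = n" and dp: "distinct p" and sp: "set p = {1..n}"
    using p by (auto simp: is_perm_def)
  fix i assume "i < length (red n ((!) p))"
  then have i: "i < n" by simp
  have "(!) p ` {j. j < n \<and> p ! j \<le> p ! i} = {1..p ! i}"
  proof
    show "{1..p ! i} \<subseteq> (!) p ` {j. j < n \<and> p ! j \<le> p ! i}"
    proof
      fix v assume v: "v \<in> {1..p ! i}"
      then have "v \<in> set p"
        using sp i len nth_mem by fastforce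
      then obtain j where "j < n" "p ! j = v"
        using len by (auto simp: in_set_conv_nth)
      then show "v \<in> (!) p ` {j. j < n \<and> p ! j \<le> p ! i}"
        using v by auto
    qed
  qed (use sp len nth_mem in fastforce)
  moreover have "inj_on ((!) p) {j. j < n \<and> p ! j \<le> p ! i}"
    using dp len by (auto simp: inj_on_def nth_eq_iff_index_eq)
  ultimately have "card {j. j < n \<and> p ! j \<le> p ! i} = p ! i"
    by (metis card_atLeastAtMost card_image diff_Suc_1)
  then show "red n ((!) p) ! i = p ! i"
    using i by (simp add: nth_red)
qed (use p in \<open>simp add: is_perm_def\<close>)

definition realizes :: "nat option list \<Rightarrow> (nat \<Rightarrow> real) \<Rightarrow> bool" where
  "realizes f r \<longleftrightarrow> (\<forall>i < length f. \<forall>a. f ! i = Some a \<longrightarrow> r i = real a)"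

lemma covers_iff_realizes:
  "covers f p \<longleftrightarrow> length f = length p \<and>
     (\<exists>r. realizes f r \<and> inj_on r {..<length f} \<and> p = red (length f) r)"
proof -
  have "p = red (length f) r \<longleftrightarrow> (\<forall>i < length f. p ! i = card {j. j < length f \<and> r j \<le> r i})"
    if "length f = length p" for r
    using that by (auto simp: list_eq_iff_nth_eq nth_red)
  then show ?thesis
    unfolding covers_def realizes_def by blast
qed

definition order_consistent :: "nat option list \<Rightarrow> (nat \<Rightarrow> 'a::linorder) \<Rightarrow> bool" where
  "order_consistent f y \<longleftrightarrow> (\<forall>i < length f. \<forall>j < length f. \<forall>a b.
     f ! i = Some a \<longrightarrow> f ! j = Some b \<longrightarrow> (a < b \<longleftrightarrow> y i < y j))"

lemma order_consistent_cong:
  assumes "\<And>i j. i < length f \<Longrightarrow> j < length f \<Longrightarrow> x i < x j \<longleftrightarrow> y i < y j"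
  shows "order_consistent f x \<longleftrightarrow> order_consistent f y"
  using assms unfolding order_consistent_def by blast

lemma realizes_order_consistent: "realizes f r \<Longrightarrow> order_consistent f r"
  unfolding realizes_def order_consistent_def by simp

lemma order_consistent_Cons_None:
  "order_consistent (None # f) y \<longleftrightarrow> order_consistent f (\<lambda>i. y (Suc i))"
  unfolding order_consistent_def by (simp add: All_less_Suc2)

lemma distinct_filter_nth_eq:
  "distinct (filter P xs) \<Longrightarrow> i < length xs \<Longrightarrow> j < length xs \<Longrightarrow> P (xs ! i) \<Longrightarrow>
     xs ! i = xs ! j \<Longrightarrow> i = j"
proof (induction xs arbitrary: i j)
  case (Cons x xs)
  then show ?case
    by (cases i; cases j) (auto split: if_splits)
qed simp

lemma distinct_ints_nth_eq:
  "distinct_ints f \<Longrightarrow> i < length f \<Longrightarrow> j < length f \<Longrightarrow> f ! i = Some a \<Longrightarrow>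
     f ! j = Some a \<Longrightarrow> i = j"
  unfolding distinct_ints_def by (rule distinct_filter_nth_eq[where P = "\<lambda>x. x \<noteq> None"]) auto

lemma order_consistent_if_mono:
  assumes di: "distinct_ints f"
    and mono: "\<And>i j a b. i < length f \<Longrightarrow> j < length f \<Longrightarrow> f ! i = Some a \<Longrightarrow> f ! j = Some b \<Longrightarrow>
      a < b \<Longrightarrow> y i < y j"
  shows "order_consistent f y"
  unfolding order_consistent_def
proof (intro allI impI iffI)
  fix i j a b assume ij: "i < length f" "j < length f" and a: "f ! i = Some a" and b: "f ! j = Some b"
  show "a < b" if "y i < y j"
  proof (rule ccontr)
    assume "\<not> a < b"
    then have "b < a \<or> a = b"
      by auto
    then have "b < a \<or> i = j"
      using distinct_ints_nth_eq[OF di ij] a b by auto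
    then show False
      using mono[OF ij(2,1) b a] that by auto
  qed
qed (rule mono)

text \<open>A Diamond at position i is replaced by the largest letter that y places below it
  (or -1), plus a fraction in (0,1) that increases with y and so orders the Diamonds among
  themselves.\<close>

definition realization :: "nat option list \<Rightarrow> (nat \<Rightarrow> real) \<Rightarrow> nat \<Rightarrow> real" where
  "realization f y i = (case f ! i of
      Some a \<Rightarrow> real a
    | None \<Rightarrow> of_int (Max (insert (-1) {int a |a. \<exists>j < length f. f ! j = Some a \<and> y j < y i}))
        + real (red (length f) y ! i) / real (length f + 1))"

lemma realizes_realization: "realizes f (realization f y)"
  by (simp add: realizes_def realization_def)

lemma finite_letters_below:
  "finite {int a |a. \<exists>j < length f. f ! j = Some a \<and> y j < y i}"
proof (rule finite_subset)
  show "{int a |a. \<exists>j < length f. f ! j = Some a \<and> y j < y i} \<subseteq>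
      (\<lambda>j. int (the (f ! j))) ` {..<length f}"
    by force
qed simp

lemma realization_None_bounds:
  fixes y :: "nat \<Rightarrow> real"
  assumes con: "order_consistent f y" and i: "i < length f" "f ! i = None"
    and j: "j < length f" "f ! j = Some b"
  shows "y j < y i \<Longrightarrow> real b < realization f y i"
    and "y i < y j \<Longrightarrow> realization f y i < real b"
proof -
  define below where "below = {int a |a. \<exists>j < length f. f ! j = Some a \<and> y j < y i}"
  define frac where "frac = real (red (length f) y ! i) / real (length f + 1)"
  have r: "realization f y i = of_int (Max (insert (-1) below)) + frac"
    using i by (simp add: realization_def below_def frac_def)
  have "0 < frac" "frac < 1"
    using nth_red_bounds[OF i(1), of y] by (auto simp: frac_def)
  moreover have fin: "finite below"
    by (simp add: below_def finite_letters_below)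
  moreover have "int b \<le> Max (insert (-1) below)" if "y j < y i"
    using fin that j by (auto simp: below_def intro!: Max_ge)
  then have "real b \<le> of_int (Max (insert (-1) below))" if "y j < y i"
    using that by (metis of_int_le_iff of_int_of_nat_eq)
  ultimately show "real b < realization f y i" if "y j < y i"
    using that unfolding r by fastforce
  have "a < b" if "k < length f" "f ! k = Some a" "y k < y i" "y i < y j" for k a
    using con that j less_trans[OF that(3,4)] unfolding order_consistent_def by blast
  then have "Max (insert (-1) below) \<le> int b - 1" if "y i < y j"
    using fin that by (auto simp: Max_le_iff below_def)
  then show "realization f y i < real b" if "y i < y j"
    using that \<open>frac < 1\<close> unfolding r by fastforce
qed

lemma realization_less:
  fixes y :: "nat \<Rightarrow> real"
  assumes inj: "inj_on y {..<length f}" and con: "order_consistent f y"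
    and ij: "i < length f" "j < length f" and less: "y i < y j"
  shows "realization f y i < realization f y j"
proof (cases "f ! i"; cases "f ! j")
  assume none: "f ! i = None" "f ! j = None"
  define below where "below k = {int a |a. \<exists>l < length f. f ! l = Some a \<and> y l < y k}" for k
  define frac where "frac k = real (red (length f) y ! k) / real (length f + 1)" for k
  have r: "realization f y k = of_int (Max (insert (-1) (below k))) + frac k" if "f ! k = None" for k
    using that unfolding realization_def below_def frac_def by simp
  have "below i \<subseteq> below j"
    unfolding below_def using less by (blast intro: less_trans)
  then have "Max (insert (-1) (below i)) \<le> Max (insert (-1) (below j))"
    by (intro Max_mono insert_mono) (simp_all add: below_def finite_letters_below)
  moreover have "frac i < frac j"
    using red_less_iff[OF inj ij] less by (simp add: frac_def divide_strict_right_mono)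
  ultimately show ?thesis
    unfolding r[OF none(1)] r[OF none(2)] by (intro add_le_less_mono) simp_all
next
  fix b assume "f ! i = None" "f ! j = Some b"
  moreover from this have "realization f y j = real b"
    by (simp add: realization_def)
  ultimately show ?thesis
    using realization_None_bounds(2)[OF con ij(1) _ ij(2) _ less] by simp
next
  fix a assume "f ! i = Some a" "f ! j = None"
  moreover from this have "realization f y i = real a"
    by (simp add: realization_def)
  ultimately show ?thesis
    using realization_None_bounds(1)[OF con ij(2) _ ij(1) _ less] by simp
next
  fix a b assume "f ! i = Some a" "f ! j = Some b"
  moreover from this have "a < b"
    using con ij less unfolding order_consistent_def by blast
  ultimately show ?thesis
    by (simp add: realization_def)
qed

lemma realization_less_iff:
  fixes y :: "nat \<Rightarrow> real"
  assumes inj: "inj_on y {..<length f}" and con: "order_consistent f y"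
    and ij: "i < length f" "j < length f"
  shows "realization f y i < realization f y j \<longleftrightarrow> y i < y j"
proof
  assume "realization f y i < realization f y j"
  moreover have "y i \<noteq> y j"
    using calculation inj ij by (auto dest: inj_onD)
  ultimately show "y i < y j"
    using realization_less[OF inj con ij(2,1)] by fastforce
qed (rule realization_less[OF inj con ij])

lemma covers_red_iff:
  fixes y :: "nat \<Rightarrow> real"
  assumes len: "length f = n" and inj: "inj_on y {..<n}"
  shows "covers f (red n y) \<longleftrightarrow> order_consistent f y"
proof
  assume "covers f (red n y)"
  then obtain r where r: "realizes f r" "inj_on r {..<n}" "red n y = red n r"
    using len by (auto simp: covers_iff_realizes)
  have "r i < r j \<longleftrightarrow> y i < y j" if "i < n" "j < n" for i j
    using red_less_iff[OF inj that] red_less_iff[OF r(2) that] r(3) by simp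
  then show "order_consistent f y"
    using realizes_order_consistent[OF r(1)] order_consistent_cong len by metis
next
  assume "order_consistent f y"
  define r where "r = realization f y"
  have r: "realizes f r"
    by (simp add: r_def realizes_realization)
  have ord: "r i < r j \<longleftrightarrow> y i < y j" if "i < n" "j < n" for i j
    using realization_less_iff[of y f] inj \<open>order_consistent f y\<close> that len by (simp add: r_def)
  have "inj_on r {..<n}"
  proof (rule inj_onI)
    fix i j assume "i \<in> {..<n}" "j \<in> {..<n}" "r i = r j"
    then show "i = j"
      using ord[of i j] ord[of j i] inj by (auto dest: inj_onD)
  qed
  moreover have "red n y = red n r"
    using ord by (intro red_cong) simp
  ultimately show "covers f (red n y)"
    using r len by (auto simp: covers_iff_realizes)
qed

lemma covers_perm_iff:
  assumes len: "length f = n" and p: "is_perm n p"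
  shows "covers f p \<longleftrightarrow> order_consistent f ((!) p)"
proof -
  let ?y = "\<lambda>i. real (p ! i)"
  have "inj_on ?y {..<n}"
    using p by (auto simp: inj_on_def is_perm_def nth_eq_iff_index_eq)
  moreover have "red n ?y = red n ((!) p)"
    by (rule red_cong) simp
  then have "red n ?y = p"
    using red_nth_perm[OF p] by simp
  ultimately have "covers f p \<longleftrightarrow> order_consistent f ?y"
    using covers_red_iff[OF len] by metis
  also have "\<dots> \<longleftrightarrow> order_consistent f ((!) p)"
    by (simp add: order_consistent_def)
  finally show ?thesis .
qed

lemma exists_order_consistent:
  assumes "distinct_ints f"
  obtains y :: "nat \<Rightarrow> real" where "inj_on y {..<length f}" and "order_consistent f y"
proof
  define y where "y t = (case f ! t of Some a \<Rightarrow> real a | None \<Rightarrow> - real (Suc t))" for t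
  show "order_consistent f y"
    by (simp add: order_consistent_def y_def)
  show "inj_on y {..<length f}"
  proof (rule inj_onI)
    fix i j assume "i \<in> {..<length f}" "j \<in> {..<length f}" "y i = y j"
    then show "i = j"
      using distinct_ints_nth_eq[OF assms]
      by (cases "f ! i"; cases "f ! j") (auto simp: y_def)
  qed
qed

lemma length_cfactor [simp]: "length (cfactor u n i) = n"
  by (simp add: cfactor_def)

lemma nth_cfactor: "t < n \<Longrightarrow> cfactor u n i ! t = u ! ((i + t) mod length u)"
  by (simp add: cfactor_def)

lemma cfactor_mod: "cfactor u n (i mod length u) = cfactor u n i"
  by (simp add: cfactor_def mod_add_left_eq)

lemma tl_cfactor: "tl (cfactor u n i) = butlast (cfactor u n (Suc i))"
  by (rule nth_equalityI) (simp_all add: nth_tl nth_butlast nth_cfactor)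

lemma upcycle_distinct_ints:
  assumes "upcycle n u"
  shows "distinct_ints (cfactor u n i)"
proof -
  have "0 < length u"
    using assms by (auto simp: upcycle_def)
  then show ?thesis
    using assms cfactor_mod[of u n i] by (metis mod_less_divisor upcycle_def)
qed

lemma upcycle_consistent_window:
  fixes y :: "nat \<Rightarrow> real"
  assumes "upcycle n u" and "inj_on y {..<n}"
  obtains i where "i < length u" and "order_consistent (cfactor u n i) y"
  using assms is_perm_red covers_red_iff unfolding upcycle_def
  by (metis length_cfactor)

lemma upcycle_consistent_window_unique:
  fixes y :: "nat \<Rightarrow> real"
  assumes up: "upcycle n u" and inj: "inj_on y {..<n}"
    and "order_consistent (cfactor u n i) y" and "order_consistent (cfactor u n j) y"
  shows "i mod length u = j mod length u"
proof -
  have pos: "0 < length u"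
    using up by (auto simp: upcycle_def)
  have cov: "covers (cfactor u n (k mod length u)) (red n y)"
    if "order_consistent (cfactor u n k) y" for k
    using that covers_red_iff[OF _ inj] by (simp add: cfactor_mod)
  have "\<exists>!k. k < length u \<and> covers (cfactor u n k) (red n y)"
    using up is_perm_red[OF inj] unfolding upcycle_def by blast
  then show ?thesis
    using cov[OF assms(3)] cov[OF assms(4)] mod_less_divisor[OF pos] by blast
qed

lemma upcycle_window_has_letter:
  assumes up: "upcycle n u" and n: "2 \<le> n"
  obtains t where "t < n" and "cfactor u n i ! t \<noteq> None"
proof (rule ccontr)
  assume "\<not> thesis"
  with that have blank: "order_consistent (cfactor u n i) y" for y :: "nat \<Rightarrow> real"
    by (auto simp: order_consistent_def)
  obtain y :: "nat \<Rightarrow> real" where "inj_on y {..<n}" "order_consistent (cfactor u n (Suc i)) y"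
    using exists_order_consistent[OF upcycle_distinct_ints[OF up]] by (metis length_cfactor)
  then have "i mod length u = Suc i mod length u"
    using upcycle_consistent_window_unique[OF up] blank by blast
  moreover have "2 \<le> length u"
    using up n by (simp add: upcycle_def)
  ultimately show False
    by (simp add: mod_Suc split: if_splits)
qed

lemma distinct_ints_butlast: "distinct_ints f \<Longrightarrow> distinct_ints (butlast f)"
  unfolding distinct_ints_def
  by (cases "f = []") (simp, metis append_butlast_last_id distinct_append filter_append)

lemma exists_order_consistent_butlast_not:
  assumes di: "distinct_ints g" and len: "length g = n" and s: "s < n - 1"
    and c: "g ! s = Some c" and b: "g ! (n - 1) = Some b"
  obtains x :: "nat \<Rightarrow> real"
  where "inj_on x {..<n}" and "order_consistent (butlast g) x" and "\<not> order_consistent g x"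
proof -
  obtain y :: "nat \<Rightarrow> real"
    where inj: "inj_on y {..<n - 1}" and con: "order_consistent (butlast g) y"
    using exists_order_consistent[OF distinct_ints_butlast[OF di]] len by auto
  define top where "top = Max (insert 0 ((\<lambda>t. \<bar>y t\<bar>) ` {..<n - 1})) + 1"
  have top: "\<bar>y t\<bar> < top" if "t < n - 1" for t
  proof -
    have "\<bar>y t\<bar> \<le> Max (insert 0 ((\<lambda>t. \<bar>y t\<bar>) ` {..<n - 1}))"
      using that by (intro Max_ge) auto
    then show ?thesis
      by (simp add: top_def)
  qed
  define x where "x t = (if t < n - 1 then y t else if b < c then top else - top)" for t
  have "b \<noteq> c"
    using distinct_ints_nth_eq[OF di, of s "n - 1"] s len b c by auto
  show ?thesis
  proof
    show "inj_on x {..<n}"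
      using inj top by (fastforce simp: x_def inj_on_def abs_less_iff)
    show "order_consistent (butlast g) x"
      using con len by (subst order_consistent_cong[where y = y]) (simp_all add: x_def)
    show "\<not> order_consistent g x"
    proof
      assume "order_consistent g x"
      then have "c < b \<longleftrightarrow> x s < x (n - 1)"
        using s len b c unfolding order_consistent_def by auto
      then show False
        using \<open>b \<noteq> c\<close> top[OF s] s by (auto simp: x_def abs_less_iff split: if_splits)
    qed
  qed
qed

text \<open>The fresh value z in front sits just above the first letter of g (if any), so it
  compares with every other letter of g as that letter does.\<close>

lemma order_consistent_prepend:
  fixes x :: "nat \<Rightarrow> real"
  assumes lenf: "length f = n" and leng: "length g = n" and shift: "tl g = butlast f"
    and di: "distinct_ints g" and inj: "inj_on x {..<n}" and con: "order_consistent f x"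
  obtains y :: "nat \<Rightarrow> real"
  where "inj_on y {..<n}" and "order_consistent g y"
    and "\<And>s t. s < n - 1 \<Longrightarrow> t < n - 1 \<Longrightarrow> y (Suc s) < y (Suc t) \<longleftrightarrow> x s < x t"
proof -
  define r where "r = realization f x"
  have r: "realizes f r"
    by (simp add: r_def realizes_realization)
  have ord: "r i < r j \<longleftrightarrow> x i < x j" if "i < n" "j < n" for i j
    using realization_less_iff[of x f] inj con that lenf by (simp add: r_def)
  have rinj: "inj_on r {..<n}"
    using ord inj by (intro inj_onI) (metis lessThan_iff inj_onD not_less_iff_gr_or_eq)
  define a0 where "a0 = (case g ! 0 of Some a \<Rightarrow> a | None \<Rightarrow> 0)"
  have "infinite ({real a0<..<real a0 + 1} - r ` {..<n})"
    by (intro Diff_infinite_finite) auto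
  then obtain z where z: "real a0 < z" "z < real a0 + 1" "z \<notin> r ` {..<n}"
    by (metis Diff_iff finite.emptyI greaterThanLessThan_iff ex_in_conv)
  define y where "y t = (case t of 0 \<Rightarrow> z | Suc s \<Rightarrow> r s)" for t
  have g_Suc: "g ! Suc s = f ! s" if "s < n - 1" for s
    using shift that lenf leng by (metis length_butlast nth_butlast nth_tl)
  show ?thesis
  proof
    show "inj_on y {..<n}"
      using z(3) rinj by (auto simp: inj_on_def y_def split: nat.splits dest: inj_onD)
    show "y (Suc s) < y (Suc t) \<longleftrightarrow> x s < x t" if "s < n - 1" "t < n - 1" for s t
      using ord that by (simp add: y_def)
    show "order_consistent g y"
      unfolding order_consistent_def
    proof (intro allI impI)
      fix i j a b assume ij: "i < length g" "j < length g" and a: "g ! i = Some a" and b: "g ! j = Some b"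
      have letter: "y k = real c" if "k \<noteq> 0" "k < n" "g ! k = Some c" for k c
        using that r g_Suc[of "k - 1"] lenf by (cases k) (auto simp: y_def realizes_def)
      have front: "y 0 < real c \<longleftrightarrow> a0 < c" "real c < y 0 \<longleftrightarrow> c < a0" if "c \<noteq> a0" for c
        using z(1,2) that by (auto simp: y_def)
      have "i = 0 \<Longrightarrow> j \<noteq> 0 \<Longrightarrow> a \<noteq> b" "i \<noteq> 0 \<Longrightarrow> j = 0 \<Longrightarrow> a \<noteq> b"
        using distinct_ints_nth_eq[OF di ij] a b by auto
      then show "a < b \<longleftrightarrow> y i < y j"
        using ij leng a b letter front by (cases "i = 0"; cases "j = 0") (auto simp: a0_def)
    qed
  qed
qed

text \<open>Prepending a fresh value to x gives a pattern consistent both with the window before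
  the one at i and with the window at p, so these two windows coincide.\<close>

lemma upcycle_window_after_diamond:
  fixes x :: "nat \<Rightarrow> real"
  assumes up: "upcycle n u" and n: "1 \<le> n" and diamond: "cfactor u n p ! 0 = None"
    and inj: "inj_on x {..<n}" and shared: "order_consistent (butlast (cfactor u n (Suc p))) x"
    and con: "order_consistent (cfactor u n i) x"
  shows "cfactor u n i = cfactor u n (Suc p)"
proof -
  define N where "N = length u"
  define w where "w i = cfactor u n i" for i
  define j where "j = i + N - 1"
  have "0 < N"
    using up by (auto simp: upcycle_def N_def)
  then have w_j: "w (Suc j) = w i"
    using cfactor_mod[of u n "i + N"] cfactor_mod[of u n i] by (simp add: w_def N_def j_def)
  have w_shift: "tl (w k) = butlast (w (Suc k))" for k
    by (simp add: w_def tl_cfactor)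
  have di: "distinct_ints (w k)" for k
    using upcycle_distinct_ints[OF up] by (simp add: w_def)
  have "order_consistent (w (Suc j)) x"
    using con w_j by (simp add: w_def)
  then obtain y :: "nat \<Rightarrow> real" where y: "inj_on y {..<n}" "order_consistent (w j) y"
    and same: "\<And>s t. s < n - 1 \<Longrightarrow> t < n - 1 \<Longrightarrow> y (Suc s) < y (Suc t) \<longleftrightarrow> x s < x t"
    using order_consistent_prepend[OF _ _ w_shift[of j] di[of j] inj] by (auto simp: w_def)
  have "length (w p) = n"
    by (simp add: w_def)
  then have "w p \<noteq> []"
    using n by auto
  moreover have "w p ! 0 = None"
    using diamond by (simp add: w_def)
  ultimately have "w p = None # butlast (w (Suc p))"
    using w_shift[of p] by (cases "w p") simp_all
  moreover have "order_consistent (butlast (w (Suc p))) (\<lambda>s. y (Suc s)) \<longleftrightarrow>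
      order_consistent (butlast (w (Suc p))) x"
    by (rule order_consistent_cong) (simp add: same w_def)
  ultimately have "order_consistent (w p) y"
    using shared by (simp add: order_consistent_Cons_None w_def)
  then have "j mod N = p mod N"
    using upcycle_consistent_window_unique[OF up y(1)] y(2) unfolding w_def N_def by blast
  then have "Suc j mod N = Suc p mod N"
    by (metis mod_Suc_eq)
  then have "w (Suc j) = w (Suc p)"
    using cfactor_mod[of u n "Suc j"] cfactor_mod[of u n "Suc p"] by (simp add: w_def N_def)
  then show ?thesis
    using w_j by (simp add: w_def)
qed

text \<open>Choose x consistent with the window at p + 1 except at its last letter. The window
  consistent with x is then forced to be the one at p + 1, a contradiction.\<close>

lemma upcycle_diamond_shift:
  assumes up: "upcycle n u" and n: "2 \<le> n" and diamond: "u ! (p mod length u) = None"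
  shows "u ! ((p + n) mod length u) = None"
proof (rule ccontr)
  define w where "w i = cfactor u n i" for i
  have di: "distinct_ints (w k)" for k
    using upcycle_distinct_ints[OF up] by (simp add: w_def)
  assume "u ! ((p + n) mod length u) \<noteq> None"
  then obtain b where b: "w (Suc p) ! (n - 1) = Some b"
    using n by (auto simp: w_def nth_cfactor)
  have w0: "w p ! 0 = None"
    using n diamond by (simp add: w_def nth_cfactor)
  obtain t where t: "t < n" "w p ! t \<noteq> None"
    using upcycle_window_has_letter[OF up n] by (metis w_def)
  moreover have "w (Suc p) ! s = w p ! Suc s" if "s < n - 1" for s
    using that by (simp add: w_def nth_cfactor)
  ultimately obtain c where c: "w (Suc p) ! (t - 1) = Some c" "t - 1 < n - 1"
    using w0 by (cases t) auto
  obtain x :: "nat \<Rightarrow> real" where x: "inj_on x {..<n}"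
    "order_consistent (butlast (w (Suc p))) x" "\<not> order_consistent (w (Suc p)) x"
    using exists_order_consistent_butlast_not[OF di _ c(2) c(1) b]
    by (auto simp: w_def)
  obtain i where "order_consistent (w i) x"
    using upcycle_consistent_window[OF up x(1)] by (metis w_def)
  moreover have "w i = w (Suc p)"
    using upcycle_window_after_diamond[OF up _ _ x(1) x(2)[unfolded w_def]] calculation n w0
    by (simp add: w_def)
  ultimately show False
    using x(3) by simp
qed

definition diamond_positions :: "nat option list \<Rightarrow> nat list" where
  "diamond_positions f = filter (\<lambda>t. f ! t = None) [0..<length f]"

lemma set_diamond_positions: "set (diamond_positions f) = {t. t < length f \<and> f ! t = None}"
  by (auto simp: diamond_positions_def)

lemma distinct_diamond_positions: "distinct (diamond_positions f)"
  by (simp add: diamond_positions_def)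

lemma length_diamond_positions:
  "length (diamond_positions f) = card {t. t < length f \<and> f ! t = None}"
  using distinct_card[OF distinct_diamond_positions] by (simp add: set_diamond_positions)

lemma image_nth_perm: "is_perm n p \<Longrightarrow> (!) p ` {..<n} = {1..n}"
  by (auto simp: is_perm_def set_conv_nth image_def)

lemma inj_on_nth_perm: "is_perm n p \<Longrightarrow> inj_on ((!) p) {..<n}"
  by (auto simp: is_perm_def inj_on_def nth_eq_iff_index_eq)

text \<open>The smallest value moved between p and q is taken by p and by q at two letter
  positions, which the two permutations then order in opposite ways.\<close>

lemma perm_order_consistent_unique:
  assumes p: "is_perm n p" and q: "is_perm n q" and len: "length f = n"
    and cp: "order_consistent f ((!) p)" and cq: "order_consistent f ((!) q)"
    and agree: "\<And>t. t < n \<Longrightarrow> f ! t = None \<Longrightarrow> p ! t = q ! t"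
  shows "p = q"
proof (rule ccontr)
  assume "p \<noteq> q"
  define E where "E = {t. t < n \<and> p ! t \<noteq> q ! t}"
  have "E \<noteq> {}"
    using \<open>p \<noteq> q\<close> p q by (auto simp: E_def is_perm_def list_eq_iff_nth_eq)
  have E_sub: "E \<subseteq> {..<n}"
    by (auto simp: E_def)
  have moved: "g ` E = g ` {..<n} - g ` ({..<n} - E)" if "inj_on g {..<n}" for g :: "nat \<Rightarrow> nat"
    using that E_sub by (auto simp: inj_on_def)
  have "(!) p ` ({..<n} - E) = (!) q ` ({..<n} - E)"
    by (rule image_cong) (auto simp: E_def)
  then have same_image: "(!) p ` E = (!) q ` E"
    using moved[OF inj_on_nth_perm[OF p]] moved[OF inj_on_nth_perm[OF q]]
      image_nth_perm[OF p] image_nth_perm[OF q] by simp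
  define m where "m = Min ((!) p ` E)"
  have fin: "finite ((!) p ` E)"
    by (simp add: E_def)
  have "m \<in> (!) p ` E" "m \<in> (!) q ` E"
    using Min_in[OF fin] \<open>E \<noteq> {}\<close> same_image by (simp_all add: m_def)
  then obtain t0 t1 where t0: "t0 \<in> E" "p ! t0 = m" and t1: "t1 \<in> E" "q ! t1 = m"
    by (metis imageE)
  have "t0 \<noteq> t1" "t0 < n" "t1 < n"
    using t0 t1 by (auto simp: E_def)
  have "p ! t0 \<le> p ! t1" "q ! t1 \<le> q ! t0"
    using t0 t1 Min_le[OF fin] same_image by (auto simp: m_def)
  moreover have "p ! t0 \<noteq> p ! t1" "q ! t1 \<noteq> q ! t0"
    using \<open>t0 \<noteq> t1\<close> \<open>t0 < n\<close> \<open>t1 < n\<close> inj_on_nth_perm[OF p] inj_on_nth_perm[OF q]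
    by (auto dest: inj_onD)
  ultimately have less: "p ! t0 < p ! t1" "q ! t1 < q ! t0"
    by simp_all
  obtain a b where "f ! t0 = Some a" "f ! t1 = Some b"
    using agree t0(1) t1(1) unfolding E_def by fastforce
  then have "a < b \<longleftrightarrow> p ! t0 < p ! t1" "b < a \<longleftrightarrow> q ! t1 < q ! t0"
    using cp cq \<open>t0 < n\<close> \<open>t1 < n\<close> len unfolding order_consistent_def by blast+
  then show False
    using less by simp
qed

lemma exists_order_iso:
  fixes key :: "'a \<Rightarrow> 'b::linorder" and V :: "'c::linorder set"
  assumes "finite V" and "finite I" and "card I = card V" and inj: "inj_on key I"
  obtains \<beta> where "bij_betw \<beta> I V"
    and "\<And>s t. s \<in> I \<Longrightarrow> t \<in> I \<Longrightarrow> key s < key t \<Longrightarrow> \<beta> s < \<beta> t"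
proof
  define e where "e = sorted_list_of_set V"
  define R where "R t = card {s \<in> I. key s < key t}" for t
  define \<beta> where "\<beta> t = e ! R t" for t
  have len_e: "length e = card I" and set_e: "set e = V" and sorted_e: "sorted_wrt (<) e"
    using assms by (simp_all add: e_def strict_sorted_iff)
  have R_less: "R t < card I" if "t \<in> I" for t
    unfolding R_def using that \<open>finite I\<close> by (intro psubset_card_mono) auto
  have R_mono: "R s < R t" if "s \<in> I" "key s < key t" for s t
    unfolding R_def using that \<open>finite I\<close> by (intro psubset_card_mono) (auto intro: less_trans)
  show mono: "\<beta> s < \<beta> t" if "s \<in> I" "t \<in> I" "key s < key t" for s t
    using sorted_wrt_nth_less[OF sorted_e R_mono[OF that(1,3)]] R_less[OF that(2)] len_e
    by (simp add: \<beta>_def)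
  have "inj_on \<beta> I"
  proof (rule inj_onI)
    fix s t assume "s \<in> I" "t \<in> I" "\<beta> s = \<beta> t"
    then show "s = t"
      using mono[of s t] mono[of t s] inj by (metis inj_onD less_irrefl linorder_neqE)
  qed
  moreover have "\<beta> ` I \<subseteq> V"
    using R_less len_e set_e by (auto simp: \<beta>_def)
  ultimately show "bij_betw \<beta> I V"
    using assms by (simp add: bij_betw_def card_image card_subset_eq)
qed

lemma is_perm_map:
  assumes "bij_betw g {..<n} {1..n}"
  shows "is_perm n (map g [0..<n])"
  using assms by (simp add: is_perm_def bij_betw_def distinct_map atLeast0LessThan)

lemma card_letter_positions:
  "card {t. t < length f \<and> f ! t \<noteq> None} = length f - length (diamond_positions f)"
proof -
  have "{..<length f} = set (diamond_positions f) \<union> {t. t < length f \<and> f ! t \<noteq> None}"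
    "set (diamond_positions f) \<inter> {t. t < length f \<and> f ! t \<noteq> None} = {}"
    by (auto simp: set_diamond_positions)
  then have "length f = length (diamond_positions f) + card {t. t < length f \<and> f ! t \<noteq> None}"
    using distinct_card[OF distinct_diamond_positions[of f]]
    by (metis card_lessThan card_Un_disjoint finite_Un finite_lessThan)
  then show ?thesis
    by simp
qed

text \<open>The Diamonds take the prescribed values, and the letter positions take the remaining
  values in the order of their letters.\<close>

lemma perm_order_consistent_exists:
  assumes len: "length f = n" and di: "distinct_ints f"
    and xs: "length xs = length (diamond_positions f)" "distinct xs" "set xs \<subseteq> {1..n}"
  obtains p where "is_perm n p" and "order_consistent f ((!) p)"
    and "map ((!) p) (diamond_positions f) = xs"
proof -
  define D where "D = diamond_positions f"
  define I where "I = {t. t < n \<and> f ! t \<noteq> None}"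
  define V where "V = {1..n} - set xs"
  have "card I = card V"
    using card_letter_positions[of f] len xs by (simp add: I_def V_def card_Diff_subset distinct_card)
  moreover have "inj_on (\<lambda>t. the (f ! t)) I"
    using distinct_ints_nth_eq[OF di] len by (auto simp: inj_on_def I_def)
  ultimately obtain \<beta> where \<beta>: "bij_betw \<beta> I V"
    and mono: "\<And>s t. s \<in> I \<Longrightarrow> t \<in> I \<Longrightarrow> the (f ! s) < the (f ! t) \<Longrightarrow> \<beta> s < \<beta> t"
    using exists_order_iso[of V I "\<lambda>t. the (f ! t)"] by (auto simp: V_def I_def)
  define val where "val t = (if t \<in> I then \<beta> t else the (map_of (zip D xs) t))" for t
  have set_D: "set D = {..<n} - I"
    using len by (auto simp: D_def I_def set_diamond_positions)
  have map_val: "map val D = xs"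
  proof (rule nth_equalityI)
    fix j assume "j < length (map val D)"
    moreover from this have "D ! j \<notin> I"
      using set_D nth_mem[of j D] by auto
    ultimately show "map val D ! j = xs ! j"
      using map_of_zip_nth[of D xs j] xs(1) by (simp add: val_def D_def distinct_diamond_positions)
  qed (simp add: xs(1) D_def)
  have "bij_betw val I V"
    using \<beta> by (rule bij_betw_cong[THEN iffD1, rotated]) (simp add: val_def)
  moreover have "bij_betw val (set D) (set xs)"
    using map_val xs(2) by (metis bij_betw_def distinct_map list.set_map)
  moreover have "I \<union> set D = {..<n}" "V \<union> set xs = {1..n}"
    using set_D xs(3) by (auto simp: I_def V_def)
  ultimately have perm: "is_perm n (map val [0..<n])"
    using bij_betw_combine[of val I V "set D" "set xs"] by (intro is_perm_map) (auto simp: V_def)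
  show ?thesis
  proof (rule that[OF perm])
    have "map ((!) (map val [0..<n])) D = map val D"
      using set_D by (intro map_cong) auto
    then show "map ((!) (map val [0..<n])) (diamond_positions f) = xs"
      using map_val unfolding D_def by (rule trans)
    show "order_consistent f ((!) (map val [0..<n]))"
    proof (rule order_consistent_if_mono[OF di])
      fix i j a b assume "i < length f" "j < length f" "f ! i = Some a" "f ! j = Some b" "a < b"
      then show "map val [0..<n] ! i < map val [0..<n] ! j"
        using mono[of i j] len by (simp add: I_def val_def)
    qed
  qed
qed

lemma bij_betw_diamond_values:
  assumes len: "length f = n" and di: "distinct_ints f"
  shows "bij_betw (\<lambda>p. map ((!) p) (diamond_positions f))
    {p. is_perm n p \<and> order_consistent f ((!) p)}
    {xs. length xs = length (diamond_positions f) \<and> distinct xs \<and> set xs \<subseteq> {1..n}}"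
    (is "bij_betw ?\<Phi> ?C ?L")
proof (rule bij_betw_imageI)
  have D_sub: "set (diamond_positions f) \<subseteq> {..<n}"
    using len by (auto simp: set_diamond_positions)
  show "inj_on ?\<Phi> ?C"
  proof (rule inj_onI, clarify)
    fix p q assume "is_perm n p" "order_consistent f ((!) p)" "is_perm n q"
      "order_consistent f ((!) q)" and eq: "?\<Phi> p = ?\<Phi> q"
    moreover have "p ! t = q ! t" if "t < n" "f ! t = None" for t
      using eq that len by (simp add: set_diamond_positions)
    ultimately show "p = q"
      using perm_order_consistent_unique[OF _ _ len] by blast
  qed
  show "?\<Phi> ` ?C = ?L"
  proof
    show "?\<Phi> ` ?C \<subseteq> ?L"
    proof
      fix xs assume "xs \<in> ?\<Phi> ` ?C"
      then obtain p where p: "is_perm n p" and xs: "xs = ?\<Phi> p"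
        by blast
      have "inj_on ((!) p) (set (diamond_positions f))" "(!) p ` set (diamond_positions f) \<subseteq> {1..n}"
        using inj_on_subset[OF inj_on_nth_perm[OF p] D_sub] image_mono[OF D_sub, of "(!) p"]
          image_nth_perm[OF p] by blast+
      then show "xs \<in> ?L"
        by (simp add: xs distinct_map distinct_diamond_positions)
    qed
    show "?L \<subseteq> ?\<Phi> ` ?C"
    proof clarify
      fix xs assume "length xs = length (diamond_positions f)" "distinct xs" "set xs \<subseteq> {1..n}"
      then obtain p where "is_perm n p" "order_consistent f ((!) p)" "?\<Phi> p = xs"
        using perm_order_consistent_exists[OF len di] by blast
      then show "xs \<in> ?\<Phi> ` ?C"
        by blast
    qed
  qed
qed

lemma card_covered_perms:
  assumes len: "length f = n" and di: "distinct_ints f"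
  shows "card {p. is_perm n p \<and> covers f p} * fact (n - length (diamond_positions f)) = fact n"
proof -
  define k where "k = length (diamond_positions f)"
  have "k \<le> n"
    using length_filter_le[of _ "[0..<n]"] len by (simp add: k_def diamond_positions_def)
  have "{p. is_perm n p \<and> covers f p} = {p. is_perm n p \<and> order_consistent f ((!) p)}"
    using covers_perm_iff[OF len] by blast
  then have "card {p. is_perm n p \<and> covers f p} = \<Prod>{n - k + 1..n}"
    using bij_betw_same_card[OF bij_betw_diamond_values[OF len di]]
      card_lists_distinct_length_eq[of "{1..n}" k] \<open>k \<le> n\<close> by (simp add: k_def)
  moreover have "fact n = fact (n - k) * \<Prod>{Suc (n - k)..n}"
    by (rule fact_eq_fact_times) simp
  ultimately show ?thesis
    by (simp add: k_def)
qed

lemma perms_eq_permutations_of_set: "{p. is_perm n p} = permutations_of_set {1..n}"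
  unfolding permutations_of_set_def is_perm_def by (auto dest: distinct_card)

lemma upcycle_length_eq_fact:
  assumes up: "upcycle n u" and k: "\<And>i. length (diamond_positions (cfactor u n i)) = k"
  shows "length u = fact (n - k)"
proof -
  define C where "C i = {p. is_perm n p \<and> covers (cfactor u n i) p}" for i
  define c where "c = card (C 0)"
  have card_C: "card (C i) * fact (n - k) = fact n" for i
    using card_covered_perms[OF length_cfactor upcycle_distinct_ints[OF up]] k
    by (simp add: C_def)
  have "card (C i) = c" for i
    using card_C[of i] card_C[of 0] by (metis c_def fact_nonzero mult_right_cancel)
  have "{p. is_perm n p} = (\<Union>i<length u. C i)"
    using up unfolding upcycle_def C_def by blast
  moreover have "finite (C i)" for i
    using perms_eq_permutations_of_set[of n] by (auto simp: C_def intro: finite_subset)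
  moreover have "C i \<inter> C j = {}" if "i < length u" "j < length u" "i \<noteq> j" for i j
    using up that unfolding upcycle_def C_def by blast
  ultimately have "card {p. is_perm n p} = (\<Sum>i<length u. card (C i))"
    by (simp add: card_UN_disjoint)
  then have "fact n = (\<Sum>i<length u. card (C i))"
    by (simp add: perms_eq_permutations_of_set)
  then have "fact n = length u * c"
    using \<open>\<And>i. card (C i) = c\<close> by simp
  moreover have "fact n = fact (n - k) * c"
    using card_C[of 0] by (simp add: c_def mult.commute)
  moreover have "c \<noteq> 0"
    using card_C[of 0] by (metis c_def fact_nonzero mult_0)
  ultimately show ?thesis
    by (metis mult_right_cancel)
qed

lemma periodic_mult:
  fixes a :: nat
  assumes "\<And>m. P (m + a) = P m"
  shows "P (m + j * a) = P m"
proof (induction j)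
  case (Suc j)
  then show ?case
    using assms[of "m + j * a"] by (simp add: ac_simps)
qed simp

lemma periodic_if_shift_closed:
  fixes a b :: nat
  assumes step: "\<And>m. P m \<Longrightarrow> P (m + a)" and per: "\<And>m. P (m + b) = P m" and "0 < b"
  shows "P (m + a) = P m"
proof
  show "P m \<Longrightarrow> P (m + a)"
    by (rule step)
  assume "P (m + a)"
  have "P (m + a + j * a)" for j
  proof (induction j)
    case (Suc j)
    then show ?case
      using step[of "m + a + j * a"] by (simp add: ac_simps)
  qed (simp add: \<open>P (m + a)\<close>)
  moreover have "m + a + (b - 1) * a = m + b * a"
    using \<open>0 < b\<close> by (cases b) simp_all
  ultimately have "P (m + b * a)"
    by metis
  then show "P m"
    using periodic_mult[of P b, OF per, of m a] by (simp add: mult.commute)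
qed

lemma periodic_gcd:
  fixes a b :: nat
  assumes per_a: "\<And>m. P (m + a) = P m" and per_b: "\<And>m. P (m + b) = P m" and "a \<noteq> 0"
  shows "P (m + gcd a b) = P m"
proof -
  obtain x y where "a * x = b * y + gcd a b"
    using bezout_nat[OF \<open>a \<noteq> 0\<close>] by blast
  then have eq: "m + gcd a b + y * b = m + x * a"
    by (simp add: algebra_simps)
  have "P (m + gcd a b) = P (m + gcd a b + y * b)"
    using periodic_mult[of P b, OF per_b] by simp
  also have "\<dots> = P m"
    unfolding eq using periodic_mult[of P a, OF per_a] by simp
  finally show ?thesis .
qed

lemma card_periodic_window:
  fixes n :: nat
  assumes per: "\<And>m. P (m + n) = P m"
  shows "card {t. t < n \<and> P (i + t)} = card {t. t < n \<and> P t}"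
proof (induction i)
  case (Suc i)
  have count: "card {t. t < n \<and> Q t} = (\<Sum>t<n. if Q t then 1 else 0)" for Q
    by (simp add: sum.If_cases Collect_conj_eq lessThan_def Int_commute)
  let ?g = "\<lambda>t. if P (i + t) then 1 else 0 :: nat"
  have "(\<Sum>t<Suc n. ?g t) = ?g 0 + (\<Sum>t<n. ?g (Suc t))"
    by (rule sum.lessThan_Suc_shift)
  moreover have "?g n = ?g 0"
    using per[of i] by simp
  ultimately have "(\<Sum>t<n. ?g (Suc t)) = (\<Sum>t<n. ?g t)"
    by simp
  then show ?case
    using Suc count by simp
qed simp

lemma card_periodic_lower_bound:
  fixes g n :: nat
  assumes per: "\<And>m. P (m + g) = P m" and "P i" and "0 < g"
  shows "n div g \<le> card {t. t < n \<and> P (i + t)}"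
proof -
  have "j * g < n" if "j < n div g" for j
  proof -
    have "Suc j * g \<le> n div g * g"
      using that by (intro mult_right_mono) simp_all
    also have "\<dots> \<le> n"
      by (simp add: div_times_less_eq_dividend)
    finally show ?thesis
      using \<open>0 < g\<close> by simp
  qed
  moreover have "P (i + j * g)" for j
    using periodic_mult[of P g, OF per, of i j] \<open>P i\<close> by simp
  ultimately have "(\<lambda>j. j * g) ` {..<n div g} \<subseteq> {t. t < n \<and> P (i + t)}"
    by blast
  then have "card ((\<lambda>j. j * g) ` {..<n div g}) \<le> card {t. t < n \<and> P (i + t)}"
    by (rule card_mono[rotated]) simp
  moreover have "inj_on (\<lambda>j. j * g) {..<n div g}"
    using \<open>0 < g\<close> by (simp add: inj_on_def)
  ultimately show ?thesis
    by (simp add: card_image)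
qed

lemma upcycle_diamond_periodic:
  assumes "upcycle n u" and "2 \<le> n"
  shows "u ! ((m + n) mod length u) = None \<longleftrightarrow> u ! (m mod length u) = None"
proof (rule periodic_if_shift_closed[where P = "\<lambda>m. u ! (m mod length u) = None"])
  show "0 < length u"
    using assms by (auto simp: upcycle_def)
qed (simp_all add: upcycle_diamond_shift[OF assms])

lemma length_diamond_positions_cfactor:
  "length (diamond_positions (cfactor u n i)) = card {t. t < n \<and> u ! ((i + t) mod length u) = None}"
  by (simp add: length_diamond_positions nth_cfactor conj_commute cong: conj_cong)

lemma upcycle_diamond_count:
  assumes up: "upcycle n u" and n: "2 \<le> n"
  obtains k where "\<And>i. length (diamond_positions (cfactor u n i)) = k"
    and "0 < k" and "k \<le> n" and "n div gcd n (length u) \<le> k"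
proof -
  define N where "N = length u"
  define diamond where "diamond m \<longleftrightarrow> u ! (m mod N) = None" for m
  have per_n: "diamond (m + n) = diamond m" for m
    using upcycle_diamond_periodic[OF up n] by (simp add: diamond_def N_def)
  have per_N: "diamond (m + N) = diamond m" for m
    by (simp add: diamond_def)
  obtain p0 where "p0 < N" "u ! p0 = None"
    using up by (auto simp: upcycle_def N_def in_set_conv_nth)
  then have "diamond p0"
    by (simp add: diamond_def)
  define k where "k = card {t. t < n \<and> diamond (p0 + t)}"
  have "length (diamond_positions (cfactor u n i)) = k" for i
    using card_periodic_window[of diamond, OF per_n] length_diamond_positions_cfactor
    by (simp add: k_def diamond_def N_def)
  moreover have "0 < k"
    using \<open>diamond p0\<close> n by (auto simp: k_def card_gt_0_iff intro!: exI[of _ 0])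
  moreover have "k \<le> n"
    using card_mono[of "{..<n}" "{t. t < n \<and> diamond (p0 + t)}"] by (auto simp: k_def)
  moreover have "n div gcd n (length u) \<le> k"
    using card_periodic_lower_bound[OF periodic_gcd[OF per_n per_N] \<open>diamond p0\<close>] n
    by (simp add: k_def N_def)
  ultimately show ?thesis
    using that by blast
qed

lemma upcycle_arithmetic_contradiction:
  fixes n k :: nat
  assumes n: "prime n \<or> n = 4" and k: "1 \<le> k" "k \<le> n" and N: "n \<le> fact (n - k)"
    and dense: "n div gcd n (fact (n - k)) \<le> k"
  shows False
  using n
proof
  assume "prime n"
  then have "coprime n (fact (n - k))"
    using k prime_dvd_fact_iff[of n "n - k"] by (simp add: prime_imp_coprime)
  then have "k = n"
    using dense k by simp
  then show False
    using N prime_gt_1_nat[OF \<open>prime n\<close>] by simp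
next
  assume "n = 4"
  have "gcd (4::nat) 6 = gcd 4 2"
    using gcd_add2[of "4::nat" 2] by simp
  then have "gcd (4::nat) 6 \<le> 2"
    using gcd_le2_nat[of 2 4] by simp
  then have "2 \<le> 4 div gcd (4::nat) 6"
    using div_le_mono2[of "gcd (4::nat) 6" 2 4] by simp
  moreover have "k \<in> {1, 2, 3, 4}"
    using k \<open>n = 4\<close> by auto
  ultimately show False
    using N dense \<open>n = 4\<close> by (auto simp: fact_numeral)
qed

theorem corollary3:
  fixes n :: nat
  assumes "prime n \<or> n = 4"
  shows "\<not> (\<exists>u. upcycle n u)"
proof
  assume "\<exists>u. upcycle n u"
  then obtain u where up: "upcycle n u" ..
  have n: "2 \<le> n"
    using assms prime_ge_2_nat by auto
  obtain k where k: "\<And>i. length (diamond_positions (cfactor u n i)) = k"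
    and "0 < k" "k \<le> n" "n div gcd n (length u) \<le> k"
    using upcycle_diamond_count[OF up n] by blast
  moreover have "length u = fact (n - k)"
    using upcycle_length_eq_fact[OF up k] .
  moreover have "n \<le> length u"
    using up by (simp add: upcycle_def)
  ultimately show False
    using upcycle_arithmetic_contradiction[OF assms, of k] by simp
qed

end
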